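(* Let $\psi\colon\mathbb R^d\to\mathbb R\cup\{+\infty\}$ be a lower semi-continuous convex function with $u\in\operatorname{dom}\psi$. Set $f=e^{-\psi}$ and $\bar u=(u,f(u))$. Let $\bar v=(v,\nu)\in\mathbb R^d\times\mathbb R$ with $\nu\ne0$. Then the following are equivalent: (1) $\bar v\in N_{\mathrm{lift}(f)}(\bar u)$ and $\langle\bar u,\bar v\rangle=1$; (2) there is $p\in\partial\psi(u)$ with $1+\langle p,u\rangle>0$ and $\bar v=\dfrac{(p,1/f(u))}{1+\langle p,u\rangle}$.
   Context: $\operatorname{dom}\psi=\{x:\psi(x)<\infty\}$; $\partial\psi(u)=\{p:\psi(y)\ge\psi(u)+\langle p,y-u\rangle\ \forall y\}$. $\operatorname{supp}f=\{x:f(x)>0\}$. Lifting $\mathrm{lift}(f)=\{(x,y)\in\mathbb R^d\times\mathbb R:x\in\overline{\operatorname{supp}f},|y|\le f(x)\}$. Fréchet normal cone $N_A(a_0)=\{w:\forall\varepsilon>0\,\exists\delta>0:\langle w,a-a_0\rangle\le\varepsilon|a-a_0|\ \forall a\in A,|a-a_0|\le\delta\}$. *)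

theory Defs
  imports "HOL-Analysis.Analysis" "HOL-Library.Extended_Real"
begin

text \<open>Functions psi : R^d -> R \<union> {+\<infinity>} are modelled as maps into ereal never taking the value -\<infinity>.\<close>

definition proper_valued :: "('a \<Rightarrow> ereal) \<Rightarrow> bool" where
  "proper_valued \<psi> \<longleftrightarrow> (\<forall>x. \<psi> x \<noteq> -\<infinity>)"

definition econvex :: "('a::real_vector \<Rightarrow> ereal) \<Rightarrow> bool" where
  "econvex \<psi> \<longleftrightarrow> (\<forall>x y t. 0 \<le> t \<and> t \<le> 1 \<longrightarrow>
      \<psi> ((1 - t) *\<^sub>R x + t *\<^sub>R y) \<le> ereal (1 - t) * \<psi> x + ereal t * \<psi> y)"

definition lsc :: "('a::topological_space \<Rightarrow> ereal) \<Rightarrow> bool" where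
  "lsc \<psi> \<longleftrightarrow> (\<forall>x. \<psi> x \<le> Liminf (at x) \<psi>)"

definition edom :: "('a \<Rightarrow> ereal) \<Rightarrow> 'a set" where
  "edom \<psi> = {x. \<psi> x < \<infinity>}"

definition subdiff :: "('a::real_inner \<Rightarrow> ereal) \<Rightarrow> 'a \<Rightarrow> 'a set" where
  "subdiff \<psi> u = {p. \<forall>y. \<psi> y \<ge> \<psi> u + ereal (p \<bullet> (y - u))}"

definition expneg :: "('a \<Rightarrow> ereal) \<Rightarrow> 'a \<Rightarrow> real" where
  "expneg \<psi> x = (if \<psi> x = \<infinity> then 0 else exp (- real_of_ereal (\<psi> x)))"

definition supp :: "('a \<Rightarrow> real) \<Rightarrow> 'a set" where
  "supp f = {x. f x > 0}"

definition lift :: "('a::topological_space \<Rightarrow> real) \<Rightarrow> ('a \<times> real) set" where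
  "lift f = {(x, y). x \<in> closure (supp f) \<and> \<bar>y\<bar> \<le> f x}"

definition normal_cone :: "'a::real_inner set \<Rightarrow> 'a \<Rightarrow> 'a set" where
  "normal_cone A a0 = {w. \<forall>\<epsilon>>0. \<exists>\<delta>>0. \<forall>a\<in>A. norm (a - a0) \<le> \<delta> \<longrightarrow>
      w \<bullet> (a - a0) \<le> \<epsilon> * norm (a - a0)}"

end

theory Submission
  imports Defs
begin

text \<open>
  Since the normal cone is a cone, both conditions say that \<open>(p, 1 / f u)\<close>
  is a Frechet normal to the lifting at \<open>(u, f u)\<close>, rescaled by the positive factor
  \<open>1 / (1 + \<langle>p, u\<rangle>)\<close> that the normalisation \<open>\<langle>(u, f u), (v, \<nu>)\<rangle> = 1\<close> forces. If \<open>p\<close> is a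
  subgradient then \<open>f x \<le> f u exp(-\<langle>p, x - u\<rangle>)\<close>, and \<open>exp(-t) \<le> 1 - t + t\<^sup>2\<close> turns this into the
  normal inequality up to a quadratic error. Conversely, a normal has nonnegative last coordinate
  (move straight down from \<open>(u, f u)\<close>), and if the subgradient inequality failed at some \<open>y\<close>,
  convexity would put a curve through \<open>(u, f u)\<close> into the lifting along which the normal grows
  linearly.
\<close>

lemma exp_le_one_plus_square:
  fixes s :: real
  assumes "s \<le> 1"
  shows "exp s \<le> 1 + s + s\<^sup>2"
proof (cases "s \<ge> 0")
  case True
  then show ?thesis using exp_bound assms by blast
next
  case False
  define a where "a = - s"
  have a: "a > 0" using False by (simp add: a_def)
  have "exp s = 1 / exp a" by (simp add: a_def exp_minus field_simps)
  also have "\<dots> \<le> 1 / (1 + a)"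
    using a exp_ge_add_one_self[of a] by (simp add: frac_le)
  also have "\<dots> \<le> 1 - a + a\<^sup>2"
  proof -
    have "(1 - a + a\<^sup>2) * (1 + a) = 1 + a ^ 3"
      by (simp add: algebra_simps power2_eq_square power3_eq_cube)
    then show ?thesis using a by (simp add: divide_le_eq)
  qed
  finally show ?thesis by (simp add: a_def)
qed

lemma normal_cone_scaleR:
  assumes w: "w \<in> normal_cone A a0" and c: "c \<ge> 0"
  shows "c *\<^sub>R w \<in> normal_cone A a0"
  unfolding normal_cone_def
proof (intro CollectI allI impI)
  fix \<epsilon> :: real
  assume "\<epsilon> > 0"
  then have "\<epsilon> / (c + 1) > 0" using c by simp
  with w obtain \<delta> where "\<delta> > 0"
    and \<delta>: "\<And>a. a \<in> A \<Longrightarrow> norm (a - a0) \<le> \<delta> \<Longrightarrow> w \<bullet> (a - a0) \<le> \<epsilon> / (c + 1) * norm (a - a0)"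
    unfolding normal_cone_def by blast
  have "c *\<^sub>R w \<bullet> (a - a0) \<le> \<epsilon> * norm (a - a0)"
    if "a \<in> A" "norm (a - a0) \<le> \<delta>" for a
  proof -
    have "c *\<^sub>R w \<bullet> (a - a0) \<le> c * (\<epsilon> / (c + 1) * norm (a - a0))"
      using mult_left_mono[OF \<delta>[OF that] c] by simp
    also have "\<dots> \<le> \<epsilon> * norm (a - a0)"
      using c \<open>\<epsilon> > 0\<close> by (simp add: field_simps mult_right_mono)
    finally show ?thesis .
  qed
  with \<open>\<delta> > 0\<close> show "\<exists>\<delta>>0. \<forall>a\<in>A. norm (a - a0) \<le> \<delta> \<longrightarrow>
      c *\<^sub>R w \<bullet> (a - a0) \<le> \<epsilon> * norm (a - a0)"
    by blast
qed

lemma normal_cone_slope_nonpos: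
  assumes w: "w \<in> normal_cone A a0" and "\<tau> > 0"
    and in_A: "\<And>t. 0 < t \<Longrightarrow> t \<le> \<tau> \<Longrightarrow> \<gamma> t \<in> A"
    and speed: "\<And>t. 0 < t \<Longrightarrow> t \<le> \<tau> \<Longrightarrow> norm (\<gamma> t - a0) \<le> K * t"
    and slope: "\<And>t. 0 < t \<Longrightarrow> t \<le> \<tau> \<Longrightarrow> \<eta> * t \<le> w \<bullet> (\<gamma> t - a0)"
  shows "\<eta> \<le> 0"
proof (rule ccontr)
  assume "\<not> \<eta> \<le> 0"
  define K' where "K' = \<bar>K\<bar> + 1"
  have K': "K' > 0" "K \<le> K'" by (auto simp: K'_def)
  have "\<eta> / (2 * K') > 0" using \<open>\<not> \<eta> \<le> 0\<close> K' by simp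
  with w obtain \<delta> where "\<delta> > 0"
    and \<delta>: "\<And>a. a \<in> A \<Longrightarrow> norm (a - a0) \<le> \<delta> \<Longrightarrow> w \<bullet> (a - a0) \<le> \<eta> / (2 * K') * norm (a - a0)"
    unfolding normal_cone_def by blast
  define t where "t = min \<tau> (\<delta> / K')"
  have t: "0 < t" "t \<le> \<tau>" "K' * t \<le> \<delta>"
    using \<open>\<tau> > 0\<close> \<open>\<delta> > 0\<close> K' by (auto simp: t_def min_def field_simps)
  have norm_le: "norm (\<gamma> t - a0) \<le> K' * t"
    using speed[OF t(1,2)] K'(2) t(1) by (meson mult_right_mono less_imp_le order_trans)
  have "\<eta> * t \<le> \<eta> / (2 * K') * norm (\<gamma> t - a0)"
    using slope[OF t(1,2)] \<delta>[OF in_A[OF t(1,2)]] norm_le t(3) by linarith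
  also have "\<dots> \<le> \<eta> / (2 * K') * (K' * t)"
    using mult_left_mono[OF norm_le, of "\<eta> / (2 * K')"] \<open>\<not> \<eta> \<le> 0\<close> K' by simp
  also have "\<dots> = \<eta> * t / 2" using K' by simp
  finally show False using \<open>\<not> \<eta> \<le> 0\<close> t(1) by simp
qed

lemma normal_cone_lift_snd_nonneg:
  fixes f :: "'a::real_inner \<Rightarrow> real"
  assumes "(w, \<nu>) \<in> normal_cone (lift f) (u, f u)" and "f u > 0"
  shows "\<nu> \<ge> 0"
proof -
  have "u \<in> closure (supp f)"
    using \<open>f u > 0\<close> closure_subset by (fastforce simp: supp_def)
  then have "- \<nu> \<le> 0"
    by (intro normal_cone_slope_nonpos[OF assms(1) \<open>f u > 0\<close>, where \<gamma> = "\<lambda>t. (u, f u - t)" and K = 1])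
      (auto simp: lift_def)
  then show ?thesis by simp
qed

lemma normal_cone_lift_of_exp_majorant:
  fixes f :: "'a::real_inner \<Rightarrow> real"
  assumes "f u > 0" and majorant: "\<And>x. f x \<le> f u * exp (- (p \<bullet> (x - u)))"
  shows "(p, 1 / f u) \<in> normal_cone (lift f) (u, f u)"
  unfolding normal_cone_def
proof (intro CollectI allI impI)
  fix \<epsilon> :: real
  assume "\<epsilon> > 0"
  define \<delta> where "\<delta> = min (1 / (norm p + 1)) (\<epsilon> / ((norm p)\<^sup>2 + 1))"
  have "\<delta> > 0" using \<open>\<epsilon> > 0\<close> by (simp add: \<delta>_def add_nonneg_pos)
  have "(p, 1 / f u) \<bullet> ((x, y) - (u, f u)) \<le> \<epsilon> * norm ((x, y) - (u, f u))"
    if "(x, y) \<in> lift f" and n_le: "norm ((x, y) - (u, f u)) \<le> \<delta>" for x y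
  proof -
    define n where "n = norm ((x, y) - (u, f u))"
    define t where "t = p \<bullet> (x - u)"
    have "norm (x - u) \<le> n"
      using norm_fst_le[of "x - u" "y - f u"] by (simp add: n_def)
    then have t_le: "\<bar>t\<bar> \<le> norm p * n"
      unfolding t_def by (meson Cauchy_Schwarz_ineq2 mult_left_mono norm_ge_zero order_trans)
    have n: "0 \<le> n" "n \<le> 1 / (norm p + 1)" "n \<le> \<epsilon> / ((norm p)\<^sup>2 + 1)"
      using n_le by (auto simp: n_def \<delta>_def)
    have "(norm p + 1) * n \<le> 1"
      using n(2) by (simp add: le_divide_eq mult.commute add_nonneg_pos)
    then have "norm p * n \<le> 1" using n(1) by (simp add: algebra_simps)
    then have "- t \<le> 1" using t_le by linarith
    have "y \<le> f u * exp (- t)"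
      using that(1) majorant[of x] abs_ge_self[of y] unfolding lift_def t_def by simp
    then have "(p, 1 / f u) \<bullet> ((x, y) - (u, f u)) \<le> t + exp (- t) - 1"
      using \<open>f u > 0\<close> by (simp add: t_def field_simps)
    also have "\<dots> \<le> t\<^sup>2"
      using exp_le_one_plus_square[OF \<open>- t \<le> 1\<close>] by simp
    also have "\<dots> \<le> (norm p * n)\<^sup>2"
      using power_mono[OF t_le abs_ge_zero, of 2] by simp
    also have "\<dots> = (norm p)\<^sup>2 * n * n"
      by (simp add: power_mult_distrib power2_eq_square)
    also have "\<dots> \<le> \<epsilon> * n"
    proof -
      have "((norm p)\<^sup>2 + 1) * n \<le> \<epsilon>"
        using n(3) by (simp add: le_divide_eq mult.commute add_nonneg_pos)
      then have "(norm p)\<^sup>2 * n \<le> \<epsilon>" using n(1) by (simp add: algebra_simps)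
      then show ?thesis using n(1) by (simp add: mult_right_mono)
    qed
    finally show ?thesis by (simp add: n_def)
  qed
  with \<open>\<delta> > 0\<close> show "\<exists>\<delta>>0. \<forall>a\<in>lift f. norm (a - (u, f u)) \<le> \<delta> \<longrightarrow>
      (p, 1 / f u) \<bullet> (a - (u, f u)) \<le> \<epsilon> * norm (a - (u, f u))"
    by fast
qed

lemma expneg_ereal: "\<psi> x = ereal r \<Longrightarrow> expneg \<psi> x = exp (- r)"
  by (simp add: expneg_def)

lemma expneg_le_exp:
  assumes "ereal w \<le> \<psi> x"
  shows "expneg \<psi> x \<le> exp (- w)"
  using assms by (cases "\<psi> x") (auto simp: expneg_def)

lemma exp_le_expneg:
  assumes "proper_valued \<psi>" and "\<psi> x \<le> ereal w"
  shows "exp (- w) \<le> expneg \<psi> x"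
  using assms by (cases "\<psi> x") (auto simp: expneg_def proper_valued_def)

lemma expneg_le_subgradient_majorant:
  assumes "p \<in> subdiff \<psi> u" and "\<psi> u = ereal r"
  shows "expneg \<psi> x \<le> expneg \<psi> u * exp (- (p \<bullet> (x - u)))"
proof -
  have "\<psi> u + ereal (p \<bullet> (x - u)) \<le> \<psi> x"
    using assms(1) unfolding subdiff_def by blast
  then have "ereal (r + p \<bullet> (x - u)) \<le> \<psi> x"
    using assms(2) by simp
  then have "expneg \<psi> x \<le> exp (- (r + p \<bullet> (x - u)))"
    by (rule expneg_le_exp)
  then show ?thesis
    by (simp add: expneg_ereal[of \<psi> u r, OF assms(2)] mult_exp_exp)
qed

lemma econvex_segment_le:
  assumes "econvex \<psi>" and "\<psi> u = ereal r" and "\<psi> y = ereal s" and "0 \<le> t" "t \<le> 1"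
  shows "\<psi> (u + t *\<^sub>R (y - u)) \<le> ereal ((1 - t) * r + t * s)"
proof -
  have "u + t *\<^sub>R (y - u) = (1 - t) *\<^sub>R u + t *\<^sub>R y"
    by (simp add: algebra_simps)
  moreover have "\<psi> ((1 - t) *\<^sub>R u + t *\<^sub>R y) \<le> ereal (1 - t) * \<psi> u + ereal t * \<psi> y"
    using assms(1)[unfolded econvex_def, rule_format, of t u y] assms(4,5) by simp
  ultimately show ?thesis
    using assms(2,3) by simp
qed

lemma lift_contains_segment_tangent:
  assumes proper: "proper_valued \<psi>" and "econvex \<psi>"
    and r: "\<psi> u = ereal r" and s: "\<psi> y = ereal s"
    and "0 \<le> t" "t \<le> 1" and pos: "0 < 1 + t * (r - s)"
  shows "(u + t *\<^sub>R (y - u), expneg \<psi> u * (1 + t * (r - s))) \<in> lift (expneg \<psi>)"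
proof -
  have above: "0 < expneg \<psi> u * (1 + t * (r - s))"
    using pos by (simp add: expneg_ereal[of \<psi> u r, OF r])
  have "expneg \<psi> u * (1 + t * (r - s)) \<le> exp (- r) * exp (t * (r - s))"
    using pos exp_ge_add_one_self[of "t * (r - s)"] by (simp add: expneg_ereal[of \<psi> u r, OF r])
  also have "\<dots> = exp (- ((1 - t) * r + t * s))"
    by (simp add: mult_exp_exp algebra_simps)
  also have "\<dots> \<le> expneg \<psi> (u + t *\<^sub>R (y - u))"
    using exp_le_expneg[OF proper econvex_segment_le[OF \<open>econvex \<psi>\<close> r s \<open>0 \<le> t\<close> \<open>t \<le> 1\<close>]] .
  finally have below: "expneg \<psi> u * (1 + t * (r - s)) \<le> expneg \<psi> (u + t *\<^sub>R (y - u))" .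
  then have "u + t *\<^sub>R (y - u) \<in> closure (supp (expneg \<psi>))"
    using above closure_subset unfolding supp_def by fastforce
  then show ?thesis
    using above below by (simp add: lift_def)
qed

text \<open>If the subgradient inequality failed at \<open>y\<close>, the tangent line \<open>f u (1 + t (\<psi> u - \<psi> y))\<close>
  over the segment towards \<open>y\<close> would be a curve in the lifting on which the normal
  \<open>(p, 1 / f u)\<close> grows linearly.\<close>

lemma subgradient_of_normal_cone_lift:
  assumes proper: "proper_valued \<psi>" and "econvex \<psi>" and r: "\<psi> u = ereal r"
    and normal: "(p, 1 / expneg \<psi> u) \<in> normal_cone (lift (expneg \<psi>)) (u, expneg \<psi> u)"
  shows "p \<in> subdiff \<psi> u"
  unfolding subdiff_def
proof (intro CollectI allI)
  fix y
  show "\<psi> u + ereal (p \<bullet> (y - u)) \<le> \<psi> y"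
  proof (rule ccontr)
    assume "\<not> ?thesis"
    then have less: "\<psi> y < ereal (r + p \<bullet> (y - u))" using r by simp
    then obtain s where s: "\<psi> y = ereal s"
      using proper by (cases "\<psi> y") (auto simp: proper_valued_def)
    define fu where "fu = expneg \<psi> u"
    define \<sigma> where "\<sigma> = r - s"
    have fu: "fu > 0" by (simp add: fu_def expneg_ereal[of \<psi> u r, OF r])
    let ?\<gamma> = "\<lambda>t. (u + t *\<^sub>R (y - u), fu * (1 + t * \<sigma>))"
    have "r + p \<bullet> (y - u) - s \<le> 0"
    proof (rule normal_cone_slope_nonpos[where \<gamma> = ?\<gamma> and \<tau> = "1 / (\<bar>\<sigma>\<bar> + 1)"
          and K = "norm (y - u) + fu * \<bar>\<sigma>\<bar>"])
      show "(p, 1 / fu) \<in> normal_cone (lift (expneg \<psi>)) (u, fu)"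
        using normal by (simp add: fu_def)
      show "0 < 1 / (\<bar>\<sigma>\<bar> + 1)" by (simp add: add_nonneg_pos)
    next
      fix t :: real
      assume t: "0 < t" "t \<le> 1 / (\<bar>\<sigma>\<bar> + 1)"
      have small: "t * \<bar>\<sigma>\<bar> + t \<le> 1"
        using t(2) pos_le_divide_eq[of "\<bar>\<sigma>\<bar> + 1" t 1] by (simp add: algebra_simps)
      then have "t \<le> 1" using mult_nonneg_nonneg[OF less_imp_le[OF t(1)] abs_ge_zero[of \<sigma>]] by linarith
      have "t * \<bar>\<sigma>\<bar> < 1" using small t(1) by linarith
      then have "0 < 1 + t * \<sigma>"
        using abs_ge_minus_self[of \<sigma>] mult_left_mono[of "- \<sigma>" "\<bar>\<sigma>\<bar>" t] t(1) by simp
      then show "?\<gamma> t \<in> lift (expneg \<psi>)"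
        using lift_contains_segment_tangent[OF proper \<open>econvex \<psi>\<close> r s _ \<open>t \<le> 1\<close>] t(1)
        by (simp add: fu_def \<sigma>_def)
      have "norm (?\<gamma> t - (u, fu)) \<le> norm (t *\<^sub>R (y - u)) + norm (fu * (t * \<sigma>))"
        using norm_Pair_le[of "t *\<^sub>R (y - u)" "fu * (t * \<sigma>)"] by (simp add: algebra_simps)
      also have "\<dots> = (norm (y - u) + fu * \<bar>\<sigma>\<bar>) * t"
        using t(1) fu by (simp only: norm_scaleR real_norm_def abs_mult) (simp add: algebra_simps)
      finally show "norm (?\<gamma> t - (u, fu)) \<le> (norm (y - u) + fu * \<bar>\<sigma>\<bar>) * t" .
      show "(r + p \<bullet> (y - u) - s) * t \<le> (p, 1 / fu) \<bullet> (?\<gamma> t - (u, fu))"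
        using fu by (simp add: \<sigma>_def algebra_simps)
    qed
    then show False using less s by simp
  qed
qed

lemma normal_cone_lift_iff_subgradient:
  assumes "proper_valued \<psi>" and "econvex \<psi>" and r: "\<psi> u = ereal r"
  shows "(p, 1 / expneg \<psi> u) \<in> normal_cone (lift (expneg \<psi>)) (u, expneg \<psi> u)
    \<longleftrightarrow> p \<in> subdiff \<psi> u"
proof
  show "p \<in> subdiff \<psi> u" if "(p, 1 / expneg \<psi> u) \<in> normal_cone (lift (expneg \<psi>)) (u, expneg \<psi> u)"
    using subgradient_of_normal_cone_lift[OF assms that] .
  have "expneg \<psi> u > 0" by (simp add: expneg_ereal[of \<psi> u r, OF r])
  then show "(p, 1 / expneg \<psi> u) \<in> normal_cone (lift (expneg \<psi>)) (u, expneg \<psi> u)"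
    if "p \<in> subdiff \<psi> u"
    using normal_cone_lift_of_exp_majorant expneg_le_subgradient_majorant[OF that r] by blast
qed

lemma inner_normalized_pair:
  fixes u p :: "'a::real_inner" and a :: real
  assumes "a \<noteq> 0" and "1 + p \<bullet> u \<noteq> 0"
  shows "(u, a) \<bullet> ((1 / (1 + p \<bullet> u)) *\<^sub>R (p, 1 / a)) = 1"
proof -
  have "(u, a) \<bullet> ((1 / (1 + p \<bullet> u)) *\<^sub>R (p, 1 / a)) = (p \<bullet> u + 1) / (1 + p \<bullet> u)"
    using assms(1) by (simp add: inner_commute add_divide_distrib)
  then show ?thesis using assms(2) by simp
qed

lemma normalized_pair_eq:
  fixes u v :: "'a::real_inner" and a \<nu> :: real
  assumes "a > 0" and "\<nu> > 0" and inner: "(u, a) \<bullet> (v, \<nu>) = 1"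
  defines "p \<equiv> (1 / (\<nu> * a)) *\<^sub>R v"
  shows "1 + p \<bullet> u > 0" and "(v, \<nu>) = (1 / (1 + p \<bullet> u)) *\<^sub>R (p, 1 / a)"
proof -
  have "(\<nu> * a) * (1 + p \<bullet> u) = 1"
    using inner assms(1,2) by (simp add: p_def inner_commute algebra_simps)
  then have "1 + p \<bullet> u = 1 / (\<nu> * a)"
    using assms(1,2) by (simp add: eq_divide_eq mult.commute)
  then show "1 + p \<bullet> u > 0" and "(v, \<nu>) = (1 / (1 + p \<bullet> u)) *\<^sub>R (p, 1 / a)"
    using assms(1,2) by (simp_all add: p_def)
qed

theorem mainTheorem8:
  fixes \<psi> :: "'a::euclidean_space \<Rightarrow> ereal" and u v :: 'a and \<nu> :: real
  assumes "proper_valued \<psi>" and "lsc \<psi>" and "econvex \<psi>"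
    and "u \<in> edom \<psi>"
    and "\<nu> \<noteq> 0"
  shows "((v, \<nu>) \<in> normal_cone (lift (expneg \<psi>)) (u, expneg \<psi> u)
            \<and> (u, expneg \<psi> u) \<bullet> (v, \<nu>) = 1)
     \<longleftrightarrow> (\<exists>p \<in> subdiff \<psi> u. 1 + p \<bullet> u > 0 \<and>
            (v, \<nu>) = (1 / (1 + p \<bullet> u)) *\<^sub>R (p, 1 / expneg \<psi> u))"
proof -
  obtain r where r: "\<psi> u = ereal r"
    using assms(1,4) by (cases "\<psi> u") (auto simp: edom_def proper_valued_def)
  define fu where "fu = expneg \<psi> u"
  have fu: "fu > 0" by (simp add: fu_def expneg_ereal[of \<psi> u r, OF r])
  let ?N = "normal_cone (lift (expneg \<psi>)) (u, fu)"
  have subgradient_iff: "(p, 1 / fu) \<in> ?N \<longleftrightarrow> p \<in> subdiff \<psi> u" for p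
    unfolding fu_def by (rule normal_cone_lift_iff_subgradient[OF assms(1,3) r])
  show ?thesis
    unfolding fu_def[symmetric]
  proof
    assume "(v, \<nu>) \<in> ?N \<and> (u, fu) \<bullet> (v, \<nu>) = 1"
    then have N: "(v, \<nu>) \<in> ?N" and inner: "(u, fu) \<bullet> (v, \<nu>) = 1" by simp_all
    have "\<nu> \<ge> 0" using N fu unfolding fu_def by (rule normal_cone_lift_snd_nonneg)
    with \<open>\<nu> \<noteq> 0\<close> have "\<nu> > 0" by simp
    define p where "p = (1 / (\<nu> * fu)) *\<^sub>R v"
    note p_pos = normalized_pair_eq(1)[OF fu \<open>\<nu> > 0\<close> inner, folded p_def]
      and v\<nu> = normalized_pair_eq(2)[OF fu \<open>\<nu> > 0\<close> inner, folded p_def]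
    have "(p, 1 / fu) = (1 + p \<bullet> u) *\<^sub>R (v, \<nu>)"
      using p_pos by (subst v\<nu>) simp
    then have "p \<in> subdiff \<psi> u"
      using normal_cone_scaleR[OF N] p_pos subgradient_iff by (metis less_imp_le)
    with p_pos v\<nu> show "\<exists>p \<in> subdiff \<psi> u. 1 + p \<bullet> u > 0 \<and> (v, \<nu>) = (1 / (1 + p \<bullet> u)) *\<^sub>R (p, 1 / fu)"
      by blast
  next
    assume "\<exists>p \<in> subdiff \<psi> u. 1 + p \<bullet> u > 0 \<and> (v, \<nu>) = (1 / (1 + p \<bullet> u)) *\<^sub>R (p, 1 / fu)"
    then obtain p where p: "p \<in> subdiff \<psi> u" and p_pos: "1 + p \<bullet> u > 0"
      and v\<nu>: "(v, \<nu>) = (1 / (1 + p \<bullet> u)) *\<^sub>R (p, 1 / fu)"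
      by blast
    have "(v, \<nu>) \<in> ?N"
      unfolding v\<nu> using p p_pos subgradient_iff by (intro normal_cone_scaleR) simp_all
    moreover have "(u, fu) \<bullet> (v, \<nu>) = 1"
      unfolding v\<nu> using p_pos fu by (intro inner_normalized_pair) simp_all
    ultimately show "(v, \<nu>) \<in> ?N \<and> (u, fu) \<bullet> (v, \<nu>) = 1" ..
  qed
qed

end
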